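(* For every $n\in\mathbb{N}$, all nonempty chains $c_k,c_s$ over $[n]$ and all formulas $\varphi,\psi$: (i) if $c_s$ is a subchain of $c_k$, then $\vdash_{(n)}\neg_{c_k}\varphi\to_{(n)}(\neg_{c_s}\psi\to_{(n)}(\varphi\to_{(n)}\psi))$; (ii) if $c_k$ is a subchain of $c_s$, then $\vdash_{(n)}\neg_{c_k}\varphi\to_{(n)}(\neg_{c_s}\psi\to_{(n)}\neg_{c_k\otimes c_s}(\varphi\to_{(n)}\psi))$; (iii) if $c_k$ and $c_s$ have no symbols in common, then $\vdash_{(n)}\neg_{c_k}\varphi\to_{(n)}(\neg_{c_s}\psi\to_{(n)}\neg_{c_s}(\varphi\to_{(n)}\psi))$.
   Context: Fix $n\in\mathbb{N}$, $n\ge 1$, and write $[n]=\{1,\dots,n\}$. Chains: a chain over $[n]$ is a finite sequence of distinct elements of $[n]$; chains with the same length and the same symbols are identified, so a chain is effectively a subset of $[n]$. $c_k$ denotes a chain with $k$ symbols, $\epsilon$ the empty chain, and $(n)$ the chain consisting of all symbols of $[n]$. For chains $c,d$: the concatenation $c\cdot d$ is the chain of symbols occurring in $c$ or in $d$; the coconcatenation $c\otimes d$ is the chain of symbols occurring in exactly one of $c,d$; $d$ is a subchain of $c$ if every symbol of $d$ is a symbol of $c$. The complementary chain $c'_{n-k}$ of $c_k$ is the chain of the symbols of $[n]$ not occurring in $c_k$. Language of $\mathbf{CPN}_n$: a countable set $P_n$ of propositional letters; constants $\perp_c$ for each chain $c$ over $[n]$ with $1\le |c|\le n-1$, and constants $\perp_{(n)}$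 (contradiction) and $\top_{(n)}$ (truth); a unary connective $\neg_c$ for each nonempty chain $c$ over $[n]$ ($\neg_{(n)}$ is the strong negation; the $\neg_c$ with $|c|\le n-1$ are weak negations); a binary connective $\to_{(n)}$. Formulas: propositional letters and constants are formulas; if $\varphi,\psi$ are formulas then so are $\neg_c\varphi$ and $(\varphi\to_{(n)}\psi)$. Conventions: $\neg_\epsilon\varphi:=\varphi$, $\perp_\epsilon:=\top_{(n)}$, and $\perp_c$ for $c=(n)$ means $\perp_{(n)}$. Abbreviations: $\varphi\wedge_{(n)}\psi:=\neg_{(n)}(\varphi\to_{(n)}\neg_{(n)}\psi)$, $\varphi\vee_{(n)}\psi:=\neg_{(n)}\varphi\to_{(n)}\psi$, $\varphi\leftrightarrow_{(n)}\psi:=(\varphi\to_{(n)}\psi)\wedge_{(n)}(\psi\to_{(n)}\varphi)$. Axioms of $\mathbf{CPN}_n$, for all formulas $\varphi,\psi,\chi$ and all nonempty chains $c_k,c_r$ over $[n]$: (A1) $\varphi\to_{(n)}(\psi\to_{(n)}\varphi)$; (A2) $(\varphi\to_{(n)}(\psi\to_{(n)}\chi))\to_{(n)}((\varphi\to_{(n)}\psi)\to_{(n)}(\varphi\to_{(n)}\chi))$; (A3) $(\neg_{(n)}\psi\to_{(n)}\neg_{(n)}\varphi)\to_{(n)}((\neg_{(n)}\psi\to_{(n)}\varphi)\to_{(n)}\psi)$; (A4) $\varphi\to_{(n)}(\perp_{c_k}\to_{(n)}\neg_{c_k}\varphi)$; (A5) $\neg_{c_k}\neg_{c_r}\varphi\leftrightarrow_{(n)}\neg_{c_k\otimes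 c_r}\varphi$; (A6) $\neg_{c_k}\perp_{c_r}\leftrightarrow_{(n)}\perp_{c_k\otimes c_r}$; (A7) $\perp_{c_k}\to_{(n)}\perp_{c_r}$, whenever $c_r$ is a subchain of $c_k$. The only rule of inference is modus ponens (from $\varphi$ and $\varphi\to_{(n)}\psi$ infer $\psi$). For a set $\Sigma$ of formulas, $\Sigma\vdash_{(n)}\varphi$ means there is a finite sequence of formulas ending with $\varphi$, each of which is an axiom, a member of $\Sigma$, or obtained from two earlier members by modus ponens; $\vdash_{(n)}\varphi$ means $\emptyset\vdash_{(n)}\varphi$. *)

theory Defs
  imports Main
begin

text \<open>Chains over [n] are identified with subsets of {1..n}.
  Formulas of CPN_n: propositional letters (countably many, indexed by nat),
  constants Bot c (for c a subset of {1..n}; Bot {} is the truth constant,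
  Bot {1..n} the contradiction), weak/strong negations Neg c (c nonempty),
  and the implication Imp.\<close>

datatype form =
    Var nat
  | Bot "nat set"
  | Neg "nat set" form
  | Imp form form

fun wf :: "nat \<Rightarrow> form \<Rightarrow> bool" where
  "wf n (Var p) = True"
| "wf n (Bot c) = (c \<subseteq> {1..n})"
| "wf n (Neg c \<phi>) = (c \<noteq> {} \<and> c \<subseteq> {1..n} \<and> wf n \<phi>)"
| "wf n (Imp \<phi> \<psi>) = (wf n \<phi> \<and> wf n \<psi>)"

definition neg :: "nat set \<Rightarrow> form \<Rightarrow> form" where
  "neg c \<phi> = (if c = {} then \<phi> else Neg c \<phi>)"

text \<open>Coconcatenation of chains (symmetric difference).\<close>
definition cocat :: "nat set \<Rightarrow> nat set \<Rightarrow> nat set" where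
  "cocat c d = (c - d) \<union> (d - c)"

definition sneg :: "nat \<Rightarrow> form \<Rightarrow> form" where
  "sneg n \<phi> = Neg {1..n} \<phi>"

definition conj :: "nat \<Rightarrow> form \<Rightarrow> form \<Rightarrow> form" where
  "conj n \<phi> \<psi> = sneg n (Imp \<phi> (sneg n \<psi>))"

definition iff :: "nat \<Rightarrow> form \<Rightarrow> form \<Rightarrow> form" where
  "iff n \<phi> \<psi> = conj n (Imp \<phi> \<psi>) (Imp \<psi> \<phi>)"

inductive axiom :: "nat \<Rightarrow> form \<Rightarrow> bool" for n :: nat where
  A1: "\<lbrakk>wf n \<phi>; wf n \<psi>\<rbrakk> \<Longrightarrow> axiom n (Imp \<phi> (Imp \<psi> \<phi>))"
| A2: "\<lbrakk>wf n \<phi>; wf n \<psi>; wf n \<chi>\<rbrakk> \<Longrightarrow>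
     axiom n (Imp (Imp \<phi> (Imp \<psi> \<chi>)) (Imp (Imp \<phi> \<psi>) (Imp \<phi> \<chi>)))"
| A3: "\<lbrakk>wf n \<phi>; wf n \<psi>\<rbrakk> \<Longrightarrow>
     axiom n (Imp (Imp (sneg n \<psi>) (sneg n \<phi>)) (Imp (Imp (sneg n \<psi>) \<phi>) \<psi>))"
| A4: "\<lbrakk>wf n \<phi>; ck \<noteq> {}; ck \<subseteq> {1..n}\<rbrakk> \<Longrightarrow>
     axiom n (Imp \<phi> (Imp (Bot ck) (Neg ck \<phi>)))"
| A5: "\<lbrakk>wf n \<phi>; ck \<noteq> {}; ck \<subseteq> {1..n}; cr \<noteq> {}; cr \<subseteq> {1..n}\<rbrakk> \<Longrightarrow>
     axiom n (iff n (Neg ck (Neg cr \<phi>)) (neg (cocat ck cr) \<phi>))"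
| A6: "\<lbrakk>ck \<noteq> {}; ck \<subseteq> {1..n}; cr \<noteq> {}; cr \<subseteq> {1..n}\<rbrakk> \<Longrightarrow>
     axiom n (iff n (Neg ck (Bot cr)) (Bot (cocat ck cr)))"
| A7: "\<lbrakk>ck \<noteq> {}; ck \<subseteq> {1..n}; cr \<noteq> {}; cr \<subseteq> {1..n}; cr \<subseteq> ck\<rbrakk> \<Longrightarrow>
     axiom n (Imp (Bot ck) (Bot cr))"

inductive derives :: "nat \<Rightarrow> form set \<Rightarrow> form \<Rightarrow> bool" for n :: nat and \<Sigma> :: "form set" where
  ax: "axiom n \<phi> \<Longrightarrow> derives n \<Sigma> \<phi>"
| hyp: "\<phi> \<in> \<Sigma> \<Longrightarrow> derives n \<Sigma> \<phi>"
| mp: "\<lbrakk>derives n \<Sigma> \<phi>; derives n \<Sigma> (Imp \<phi> \<psi>)\<rbrakk> \<Longrightarrow> derives n \<Sigma> \<psi>"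

definition provable :: "nat \<Rightarrow> form \<Rightarrow> bool" where
  "provable n \<phi> = derives n {} \<phi>"

end

theory Submission
  imports Defs
begin

text \<open>Relative to the constant \<open>Bot c\<close>, the weak negation \<open>Neg c\<close> is either trivial or
  strong. If \<open>Bot c\<close> holds, A4 gives \<open>Neg c \<phi>\<close> from \<open>\<phi>\<close>, and A5 with \<open>cocat c c = {}\<close> gives
  \<open>\<phi>\<close> back from \<open>Neg c \<phi>\<close>. If \<open>sneg n (Bot c)\<close> holds, A6 yields \<open>Bot\<close> of the complement
  \<open>c'\<close> of \<open>c\<close>, and A5 with \<open>cocat c' c = {1..n}\<close> makes \<open>Neg c \<phi>\<close> equivalent to
  \<open>sneg n \<phi>\<close>. Axioms A1--A3 make the strong negation classical, so each claim follows by
  a case split on \<open>Bot ck\<close> and \<open>Bot cs\<close>. The constants of the chains are related by A7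
  and by \<open>Bot c, Bot d \<turnstile> Bot (c \<union> d)\<close> for disjoint \<open>c\<close>, \<open>d\<close> (via A4 and A6).\<close>

context
  fixes n :: nat
  assumes n_pos: "1 \<le> n"
begin

abbreviation derivable :: "form set \<Rightarrow> form \<Rightarrow> bool" (infix "\<turnstile>" 50)
  where "\<Sigma> \<turnstile> A \<equiv> derives n \<Sigma> A"

abbreviation wf_set :: "form set \<Rightarrow> bool"
  where "wf_set \<Sigma> \<equiv> \<forall>A\<in>\<Sigma>. wf n A"

abbreviation N :: "form \<Rightarrow> form"
  where "N A \<equiv> sneg n A"

notation Imp (infixr "\<rightarrow>" 55)

lemma axiom_wf: "axiom n A \<Longrightarrow> wf n A"
  by (induction rule: axiom.induct)
     (use n_pos in \<open>auto simp: iff_def conj_def sneg_def neg_def cocat_def\<close>)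

lemma derives_wf: "\<Sigma> \<turnstile> A \<Longrightarrow> wf_set \<Sigma> \<Longrightarrow> wf n A"
  by (induction rule: derives.induct) (auto simp: axiom_wf)

lemma derives_mono: "\<Sigma> \<turnstile> A \<Longrightarrow> \<Sigma> \<subseteq> \<Sigma>' \<Longrightarrow> \<Sigma>' \<turnstile> A"
  by (induction rule: derives.induct) (auto intro: derives.intros)

lemma derives_insert: "\<Sigma> \<turnstile> A \<Longrightarrow> insert B \<Sigma> \<turnstile> A"
  by (erule derives_mono) blast

lemma derives_insertI: "insert A \<Sigma> \<turnstile> A"
  by (simp add: derives.hyp)

lemma wf_sneg [simp]: "wf n (N A) = wf n A"
  using n_pos by (simp add: sneg_def)

lemma derives_K: "\<Sigma> \<turnstile> A \<Longrightarrow> wf n A \<Longrightarrow> wf n B \<Longrightarrow> \<Sigma> \<turnstile> B \<rightarrow> A"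
  by (meson derives.mp derives.ax axiom.A1)

lemma derives_Imp_refl:
  assumes "wf n A"
  shows "\<Sigma> \<turnstile> A \<rightarrow> A"
proof -
  have "\<Sigma> \<turnstile> (A \<rightarrow> (A \<rightarrow> A) \<rightarrow> A) \<rightarrow> (A \<rightarrow> A \<rightarrow> A) \<rightarrow> A \<rightarrow> A"
    and "\<Sigma> \<turnstile> A \<rightarrow> (A \<rightarrow> A) \<rightarrow> A" and "\<Sigma> \<turnstile> A \<rightarrow> A \<rightarrow> A"
    using assms by (simp_all add: derives.ax axiom.A1 axiom.A2)
  then show ?thesis by (meson derives.mp)
qed

text \<open>Hypotheses must be well-formed because A1 is only available for well-formed formulas.\<close>

theorem deduction:
  assumes "insert A \<Sigma> \<turnstile> B" and "wf n A" and "wf_set \<Sigma>"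
  shows "\<Sigma> \<turnstile> A \<rightarrow> B"
  using assms(1)
proof induction
  case (ax C)
  then show ?case using derives_K derives.ax axiom_wf assms(2) by blast
next
  case (hyp C)
  then show ?case using derives_Imp_refl derives_K derives.hyp assms(2,3) by auto
next
  case (mp C D)
  have "wf n C" "wf n (C \<rightarrow> D)"
    using mp.hyps derives_wf assms(2,3) by (metis insert_iff)+
  then have "\<Sigma> \<turnstile> (A \<rightarrow> C \<rightarrow> D) \<rightarrow> (A \<rightarrow> C) \<rightarrow> A \<rightarrow> D"
    using assms(2) by (simp add: derives.ax axiom.A2)
  with mp.IH show ?case by (meson derives.mp)
qed

lemma sneg_reductio:
  "\<Sigma> \<turnstile> N B \<rightarrow> N A \<Longrightarrow> \<Sigma> \<turnstile> N B \<rightarrow> A \<Longrightarrow> wf n A \<Longrightarrow> wf n B \<Longrightarrow> \<Sigma> \<turnstile> B"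
  by (meson derives.mp derives.ax axiom.A3)

lemma sneg_explosion: "\<Sigma> \<turnstile> N A \<Longrightarrow> \<Sigma> \<turnstile> A \<Longrightarrow> wf n A \<Longrightarrow> wf n B \<Longrightarrow> \<Sigma> \<turnstile> B"
  by (rule sneg_reductio[of _ B A]) (simp_all add: derives_K)

lemma sneg_sneg_elim: "\<Sigma> \<turnstile> N (N A) \<Longrightarrow> wf n A \<Longrightarrow> \<Sigma> \<turnstile> A"
  by (rule sneg_reductio[of _ A "N A"]) (simp_all add: derives_K derives_Imp_refl)

lemma sneg_contrapos:
  assumes "\<Sigma> \<turnstile> A \<rightarrow> B" and "\<Sigma> \<turnstile> N B" and "wf n A" "wf n B" "wf_set \<Sigma>"
  shows "\<Sigma> \<turnstile> N A"
proof (rule sneg_reductio[of _ "N A" B])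
  have "insert (N (N A)) \<Sigma> \<turnstile> A"
    using derives_insertI assms(3) by (rule sneg_sneg_elim)
  then have "insert (N (N A)) \<Sigma> \<turnstile> B"
    using derives_insert[OF assms(1)] by (rule derives.mp)
  then show "\<Sigma> \<turnstile> N (N A) \<rightarrow> B"
    by (rule deduction) (use assms in simp_all)
qed (use assms in \<open>simp_all add: derives_K\<close>)

lemma Imp_of_sneg:
  assumes "\<Sigma> \<turnstile> N A" and "wf n A" "wf n B" "wf_set \<Sigma>"
  shows "\<Sigma> \<turnstile> A \<rightarrow> B"
proof (rule deduction)
  show "insert A \<Sigma> \<turnstile> B"
    using derives_insert[OF assms(1)] derives_insertI by (rule sneg_explosion) fact+
qed fact+

lemma sneg_Imp:
  assumes "\<Sigma> \<turnstile> A" and "\<Sigma> \<turnstile> N B" and "wf n A" "wf n B" "wf_set \<Sigma>"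
  shows "\<Sigma> \<turnstile> N (A \<rightarrow> B)"
proof (rule sneg_contrapos[OF _ assms(2)])
  have "insert (A \<rightarrow> B) \<Sigma> \<turnstile> B"
    using derives_insert[OF assms(1)] derives_insertI by (rule derives.mp)
  then show "\<Sigma> \<turnstile> (A \<rightarrow> B) \<rightarrow> B"
    by (rule deduction) (use assms in simp_all)
qed (use assms in simp_all)

lemma derives_sneg_cases:
  assumes "insert A \<Sigma> \<turnstile> B" and "insert (N A) \<Sigma> \<turnstile> B" and "wf n A" "wf n B" "wf_set \<Sigma>"
  shows "\<Sigma> \<turnstile> B"
proof (rule sneg_reductio[of _ B A])
  have from_pos: "insert (N B) \<Sigma> \<turnstile> A \<rightarrow> B" and from_neg: "insert (N B) \<Sigma> \<turnstile> N A \<rightarrow> B"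
    using assms by (simp_all add: deduction derives_insert)
  have "insert (N B) \<Sigma> \<turnstile> N A"
    using from_pos derives_insertI by (rule sneg_contrapos) (use assms in simp_all)
  then show "\<Sigma> \<turnstile> N B \<rightarrow> N A"
    by (rule deduction) (use assms in simp_all)
  have "insert (N B) \<Sigma> \<turnstile> N (N A)"
    using from_neg derives_insertI by (rule sneg_contrapos) (use assms in simp_all)
  then have "insert (N B) \<Sigma> \<turnstile> A"
    using assms(3) by (rule sneg_sneg_elim)
  then show "\<Sigma> \<turnstile> N B \<rightarrow> A"
    by (rule deduction) (use assms in simp_all)
qed fact+

lemma conj_elim1:
  assumes "\<Sigma> \<turnstile> conj n A B" and "wf n A" "wf n B" "wf_set \<Sigma>"
  shows "\<Sigma> \<turnstile> A"
proof (rule sneg_sneg_elim)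
  have "insert (N A) \<Sigma> \<turnstile> A \<rightarrow> N B"
    using derives_insertI by (rule Imp_of_sneg) (use assms in simp_all)
  then have "\<Sigma> \<turnstile> N A \<rightarrow> A \<rightarrow> N B"
    by (rule deduction) (use assms in simp_all)
  then show "\<Sigma> \<turnstile> N (N A)"
    by (rule sneg_contrapos) (use assms in \<open>simp_all add: conj_def\<close>)
qed fact

lemma iff_mp:
  assumes "\<Sigma> \<turnstile> iff n A B" and "\<Sigma> \<turnstile> A" and "wf n A" "wf n B" "wf_set \<Sigma>"
  shows "\<Sigma> \<turnstile> B"
proof -
  have "\<Sigma> \<turnstile> A \<rightarrow> B"
    by (rule conj_elim1[of _ _ "B \<rightarrow> A"]) (use assms in \<open>simp_all add: iff_def\<close>)
  with assms(2) show ?thesis by (rule derives.mp)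
qed

lemma Bot_mono:
  "\<Sigma> \<turnstile> Bot c \<Longrightarrow> d \<noteq> {} \<Longrightarrow> d \<subseteq> c \<Longrightarrow> c \<subseteq> {1..n} \<Longrightarrow> \<Sigma> \<turnstile> Bot d"
  by (erule derives.mp, rule derives.ax, rule axiom.A7) auto

lemma Neg_intro:
  "\<Sigma> \<turnstile> Bot c \<Longrightarrow> \<Sigma> \<turnstile> A \<Longrightarrow> c \<noteq> {} \<Longrightarrow> c \<subseteq> {1..n} \<Longrightarrow> wf n A \<Longrightarrow> \<Sigma> \<turnstile> Neg c A"
  by (meson derives.mp derives.ax axiom.A4)

lemma Neg_Neg_elim:
  assumes "\<Sigma> \<turnstile> Neg c (Neg d A)"
    and "c \<noteq> {}" "c \<subseteq> {1..n}" "d \<noteq> {}" "d \<subseteq> {1..n}" "wf n A" "wf_set \<Sigma>"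
  shows "\<Sigma> \<turnstile> neg (cocat c d) A"
proof (rule iff_mp[OF _ assms(1)])
  show "\<Sigma> \<turnstile> iff n (Neg c (Neg d A)) (neg (cocat c d) A)"
    using assms by (intro derives.ax axiom.A5)
qed (use assms in \<open>auto simp: neg_def cocat_def\<close>)

lemma Neg_Bot_elim:
  assumes "\<Sigma> \<turnstile> Neg c (Bot d)"
    and "c \<noteq> {}" "c \<subseteq> {1..n}" "d \<noteq> {}" "d \<subseteq> {1..n}" "wf_set \<Sigma>"
  shows "\<Sigma> \<turnstile> Bot (cocat c d)"
proof (rule iff_mp[OF _ assms(1)])
  show "\<Sigma> \<turnstile> iff n (Neg c (Bot d)) (Bot (cocat c d))"
    using assms by (intro derives.ax axiom.A6)
qed (use assms in \<open>auto simp: cocat_def\<close>)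

lemma Neg_elim:
  assumes "\<Sigma> \<turnstile> Bot c" and "\<Sigma> \<turnstile> Neg c A" and "c \<noteq> {}" "c \<subseteq> {1..n}" "wf n A" "wf_set \<Sigma>"
  shows "\<Sigma> \<turnstile> A"
proof -
  have "\<Sigma> \<turnstile> Neg c (Neg c A)"
    using assms(1,2) by (rule Neg_intro) (use assms in simp_all)
  then have "\<Sigma> \<turnstile> neg (cocat c c) A"
    by (rule Neg_Neg_elim) (use assms in simp_all)
  then show ?thesis by (simp add: cocat_def neg_def)
qed

lemma Bot_of_sneg_Bot:
  assumes "\<Sigma> \<turnstile> N (Bot c)"
    and "c \<noteq> {}" "c \<subseteq> {1..n}" "d \<noteq> {}" "d \<subseteq> {1..n}" "c \<inter> d = {}" "wf_set \<Sigma>"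
  shows "\<Sigma> \<turnstile> Bot d"
proof -
  have "\<Sigma> \<turnstile> Bot (cocat {1..n} c)"
    using assms(1) unfolding sneg_def by (rule Neg_Bot_elim) (use assms n_pos in auto)
  then show ?thesis
    by (rule Bot_mono) (use assms in \<open>auto simp: cocat_def\<close>)
qed

lemma Neg_elim_sneg:
  assumes "\<Sigma> \<turnstile> N (Bot c)" and "\<Sigma> \<turnstile> Neg c A" and "c \<noteq> {}" "c \<subseteq> {1..n}" "wf n A" "wf_set \<Sigma>"
  shows "\<Sigma> \<turnstile> N A"
proof (cases "c = {1..n}")
  case True
  then show ?thesis using assms(2) by (simp add: sneg_def)
next
  case False
  let ?d = "{1..n} - c"
  have "\<Sigma> \<turnstile> Bot ?d"
    using assms(1) by (rule Bot_of_sneg_Bot) (use assms False in auto)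
  then have "\<Sigma> \<turnstile> Neg ?d (Neg c A)"
    using assms(2) by (rule Neg_intro) (use assms False in auto)
  then have "\<Sigma> \<turnstile> neg (cocat ?d c) A"
    by (rule Neg_Neg_elim) (use assms False in auto)
  moreover have "cocat ?d c = {1..n}"
    using assms(4) by (auto simp: cocat_def)
  ultimately show ?thesis using n_pos by (simp add: neg_def sneg_def)
qed

lemma Neg_intro_sneg:
  assumes "\<Sigma> \<turnstile> N (Bot c)" and "\<Sigma> \<turnstile> N A" and "c \<noteq> {}" "c \<subseteq> {1..n}" "wf n A" "wf_set \<Sigma>"
  shows "\<Sigma> \<turnstile> Neg c A"
proof (cases "c = {1..n}")
  case True
  then show ?thesis using assms(2) by (simp add: sneg_def)
next
  case False
  let ?d = "{1..n} - c"
  have "\<Sigma> \<turnstile> Bot ?d"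
    using assms(1) by (rule Bot_of_sneg_Bot) (use assms False in auto)
  then have "\<Sigma> \<turnstile> Neg ?d (Neg {1..n} A)"
    using assms(2) unfolding sneg_def by (rule Neg_intro) (use assms False n_pos in auto)
  then have "\<Sigma> \<turnstile> neg (cocat ?d {1..n}) A"
    by (rule Neg_Neg_elim) (use assms False n_pos in auto)
  moreover have "cocat ?d {1..n} = c"
    using assms(4) by (auto simp: cocat_def)
  ultimately show ?thesis using assms(3) by (simp add: neg_def)
qed

lemma Bot_Un:
  assumes "\<Sigma> \<turnstile> Bot c" and "\<Sigma> \<turnstile> Bot d"
    and "c \<noteq> {}" "c \<subseteq> {1..n}" "d \<noteq> {}" "d \<subseteq> {1..n}" "c \<inter> d = {}" "wf_set \<Sigma>"
  shows "\<Sigma> \<turnstile> Bot (c \<union> d)"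
proof -
  have "\<Sigma> \<turnstile> Neg c (Bot d)"
    using assms(1,2) by (rule Neg_intro) (use assms in auto)
  then have "\<Sigma> \<turnstile> Bot (cocat c d)"
    by (rule Neg_Bot_elim) (use assms in auto)
  moreover have "cocat c d = c \<union> d"
    using assms(7) by (auto simp: cocat_def)
  ultimately show ?thesis by simp
qed

lemma sneg_Bot_diff:
  assumes "\<Sigma> \<turnstile> Bot c" and "\<Sigma> \<turnstile> N (Bot d)"
    and "c \<noteq> {}" "c \<subset> d" "d \<subseteq> {1..n}" "wf_set \<Sigma>"
  shows "\<Sigma> \<turnstile> N (Bot (d - c))"
proof (rule sneg_contrapos[OF _ assms(2)])
  have "insert (Bot (d - c)) \<Sigma> \<turnstile> Bot (c \<union> (d - c))"
    using derives_insert[OF assms(1)] derives_insertI by (rule Bot_Un) (use assms in auto)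
  then have "insert (Bot (d - c)) \<Sigma> \<turnstile> Bot d"
    using assms(4) by (simp add: Un_absorb1)
  then show "\<Sigma> \<turnstile> Bot (d - c) \<rightarrow> Bot d"
    by (rule deduction) (use assms in auto)
qed (use assms in auto)

lemma Imp_from_Neg_subchain:
  assumes "\<Gamma> \<turnstile> Neg ck \<phi>" and "\<Gamma> \<turnstile> Neg cs \<psi>"
    and "ck \<subseteq> {1..n}" "cs \<noteq> {}" "cs \<subseteq> ck" "wf n \<phi>" "wf n \<psi>" "wf_set \<Gamma>"
  shows "\<Gamma> \<turnstile> \<phi> \<rightarrow> \<psi>"
proof (rule derives_sneg_cases[of "Bot ck"])
  let ?\<Gamma> = "insert (Bot ck) \<Gamma>"
  have "?\<Gamma> \<turnstile> Bot cs"
    using derives_insertI by (rule Bot_mono) (use assms in auto)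
  then have "?\<Gamma> \<turnstile> \<psi>"
    using derives_insert[OF assms(2)] by (rule Neg_elim) (use assms in auto)
  then show "?\<Gamma> \<turnstile> \<phi> \<rightarrow> \<psi>"
    by (rule derives_K) fact+
next
  let ?\<Gamma> = "insert (N (Bot ck)) \<Gamma>"
  have "?\<Gamma> \<turnstile> N \<phi>"
    using derives_insertI derives_insert[OF assms(1)] by (rule Neg_elim_sneg) (use assms in auto)
  then show "?\<Gamma> \<turnstile> \<phi> \<rightarrow> \<psi>"
    by (rule Imp_of_sneg) (use assms in auto)
qed (use assms in auto)

lemma Neg_diff_Imp_from_Neg_superchain:
  assumes "\<Gamma> \<turnstile> Neg ck \<phi>" and "\<Gamma> \<turnstile> Neg cs \<psi>"
    and "ck \<noteq> {}" "ck \<subset> cs" "cs \<subseteq> {1..n}" "wf n \<phi>" "wf n \<psi>" "wf_set \<Gamma>"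
  shows "\<Gamma> \<turnstile> Neg (cs - ck) (\<phi> \<rightarrow> \<psi>)"
proof (rule derives_sneg_cases[of "Bot cs"])
  let ?\<Gamma> = "insert (Bot cs) \<Gamma>"
  have "?\<Gamma> \<turnstile> \<psi>"
    using derives_insertI derives_insert[OF assms(2)] by (rule Neg_elim) (use assms in auto)
  then have "?\<Gamma> \<turnstile> \<phi> \<rightarrow> \<psi>"
    by (rule derives_K) (use assms in simp_all)
  moreover have "?\<Gamma> \<turnstile> Bot (cs - ck)"
    using derives_insertI by (rule Bot_mono) (use assms in auto)
  ultimately show "?\<Gamma> \<turnstile> Neg (cs - ck) (\<phi> \<rightarrow> \<psi>)"
    by (intro Neg_intro) (use assms in auto)
next
  let ?\<Gamma> = "insert (N (Bot cs)) \<Gamma>"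
  show "?\<Gamma> \<turnstile> Neg (cs - ck) (\<phi> \<rightarrow> \<psi>)"
  proof (rule derives_sneg_cases[of "Bot ck"])
    let ?\<Delta> = "insert (Bot ck) ?\<Gamma>"
    have "?\<Delta> \<turnstile> \<phi>"
      using derives_insertI derives_insert[OF derives_insert[OF assms(1)]]
      by (rule Neg_elim) (use assms in auto)
    moreover have "?\<Delta> \<turnstile> N \<psi>"
      using derives_insert[OF derives_insertI] derives_insert[OF derives_insert[OF assms(2)]]
      by (rule Neg_elim_sneg) (use assms in auto)
    ultimately have "?\<Delta> \<turnstile> N (\<phi> \<rightarrow> \<psi>)"
      by (rule sneg_Imp) (use assms in auto)
    moreover have "?\<Delta> \<turnstile> N (Bot (cs - ck))"
      using derives_insertI derives_insert[OF derives_insertI]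
      by (rule sneg_Bot_diff) (use assms in auto)
    ultimately show "?\<Delta> \<turnstile> Neg (cs - ck) (\<phi> \<rightarrow> \<psi>)"
      by (intro Neg_intro_sneg) (use assms in auto)
  next
    let ?\<Delta> = "insert (N (Bot ck)) ?\<Gamma>"
    have "?\<Delta> \<turnstile> N \<phi>"
      using derives_insertI derives_insert[OF derives_insert[OF assms(1)]]
      by (rule Neg_elim_sneg) (use assms in auto)
    then have "?\<Delta> \<turnstile> \<phi> \<rightarrow> \<psi>"
      by (rule Imp_of_sneg) (use assms in auto)
    moreover have "?\<Delta> \<turnstile> Bot (cs - ck)"
      using derives_insertI by (rule Bot_of_sneg_Bot) (use assms in auto)
    ultimately show "?\<Delta> \<turnstile> Neg (cs - ck) (\<phi> \<rightarrow> \<psi>)"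
      by (intro Neg_intro) (use assms in auto)
  qed (use assms in auto)
qed (use assms in auto)

lemma Neg_Imp_from_Neg_disjoint:
  assumes "\<Gamma> \<turnstile> Neg ck \<phi>" and "\<Gamma> \<turnstile> Neg cs \<psi>"
    and "ck \<noteq> {}" "ck \<subseteq> {1..n}" "cs \<noteq> {}" "cs \<subseteq> {1..n}" "ck \<inter> cs = {}"
    and "wf n \<phi>" "wf n \<psi>" "wf_set \<Gamma>"
  shows "\<Gamma> \<turnstile> Neg cs (\<phi> \<rightarrow> \<psi>)"
proof (rule derives_sneg_cases[of "Bot ck"])
  let ?\<Gamma> = "insert (Bot ck) \<Gamma>"
  have \<phi>: "?\<Gamma> \<turnstile> \<phi>"
    using derives_insertI derives_insert[OF assms(1)] by (rule Neg_elim) (use assms in auto)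
  show "?\<Gamma> \<turnstile> Neg cs (\<phi> \<rightarrow> \<psi>)"
  proof (rule derives_sneg_cases[of "Bot cs"])
    let ?\<Delta> = "insert (Bot cs) ?\<Gamma>"
    have "?\<Delta> \<turnstile> \<psi>"
      using derives_insertI derives_insert[OF derives_insert[OF assms(2)]]
      by (rule Neg_elim) (use assms in auto)
    then have "?\<Delta> \<turnstile> \<phi> \<rightarrow> \<psi>"
      by (rule derives_K) (use assms in simp_all)
    with derives_insertI show "?\<Delta> \<turnstile> Neg cs (\<phi> \<rightarrow> \<psi>)"
      by (rule Neg_intro) (use assms in auto)
  next
    let ?\<Delta> = "insert (N (Bot cs)) ?\<Gamma>"
    have "?\<Delta> \<turnstile> N \<psi>"
      using derives_insertI derives_insert[OF derives_insert[OF assms(2)]]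
      by (rule Neg_elim_sneg) (use assms in auto)
    with derives_insert[OF \<phi>] have "?\<Delta> \<turnstile> N (\<phi> \<rightarrow> \<psi>)"
      by (rule sneg_Imp) (use assms in auto)
    with derives_insertI show "?\<Delta> \<turnstile> Neg cs (\<phi> \<rightarrow> \<psi>)"
      by (rule Neg_intro_sneg) (use assms in auto)
  qed (use assms in auto)
next
  let ?\<Gamma> = "insert (N (Bot ck)) \<Gamma>"
  have "?\<Gamma> \<turnstile> N \<phi>"
    using derives_insertI derives_insert[OF assms(1)] by (rule Neg_elim_sneg) (use assms in auto)
  then have "?\<Gamma> \<turnstile> \<phi> \<rightarrow> \<psi>"
    by (rule Imp_of_sneg) (use assms in auto)
  moreover have "?\<Gamma> \<turnstile> Bot cs"
    using derives_insertI by (rule Bot_of_sneg_Bot) (use assms in auto)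
  ultimately show "?\<Gamma> \<turnstile> Neg cs (\<phi> \<rightarrow> \<psi>)"
    by (intro Neg_intro) (use assms in auto)
qed (use assms in auto)

lemma provable_Imp_Imp_from_derives:
  assumes "\<And>\<Gamma>. \<Gamma> \<turnstile> A \<Longrightarrow> \<Gamma> \<turnstile> B \<Longrightarrow> wf_set \<Gamma> \<Longrightarrow> \<Gamma> \<turnstile> C"
    and "wf n A" "wf n B"
  shows "provable n (A \<rightarrow> B \<rightarrow> C)"
proof -
  have "{B, A} \<turnstile> C"
    by (rule assms(1)) (simp_all add: derives.hyp assms(2,3))
  then have "{A} \<turnstile> B \<rightarrow> C"
    by (rule deduction) (use assms in simp_all)
  then have "{} \<turnstile> A \<rightarrow> B \<rightarrow> C"
    by (rule deduction) (use assms in simp_all)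
  then show ?thesis by (simp add: provable_def)
qed

end

theorem mainTheorem8:
  fixes n :: nat and ck cs :: "nat set" and \<phi> \<psi> :: form
  assumes "n \<ge> 1"
    and "ck \<noteq> {}" and "ck \<subseteq> {1..n}"
    and "cs \<noteq> {}" and "cs \<subseteq> {1..n}"
    and "wf n \<phi>" and "wf n \<psi>"
  shows "(cs \<subseteq> ck \<longrightarrow>
            provable n (Imp (Neg ck \<phi>) (Imp (Neg cs \<psi>) (Imp \<phi> \<psi>))))
       \<and> (ck \<subseteq> cs \<longrightarrow>
            provable n (Imp (Neg ck \<phi>) (Imp (Neg cs \<psi>) (neg (cocat ck cs) (Imp \<phi> \<psi>)))))
       \<and> (ck \<inter> cs = {} \<longrightarrow>
            provable n (Imp (Neg ck \<phi>) (Imp (Neg cs \<psi>) (Neg cs (Imp \<phi> \<psi>)))))"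
proof (intro conjI impI)
  note provable_from = provable_Imp_Imp_from_derives[OF \<open>n \<ge> 1\<close>]
  show "provable n (Imp (Neg ck \<phi>) (Imp (Neg cs \<psi>) (Imp \<phi> \<psi>)))" if "cs \<subseteq> ck"
    using that assms by (intro provable_from Imp_from_Neg_subchain) auto
  show "provable n (Imp (Neg ck \<phi>) (Imp (Neg cs \<psi>) (neg (cocat ck cs) (Imp \<phi> \<psi>))))"
    if "ck \<subseteq> cs"
  proof (cases "ck = cs")
    case True
    then have "neg (cocat ck cs) (Imp \<phi> \<psi>) = Imp \<phi> \<psi>"
      by (simp add: cocat_def neg_def)
    with True show ?thesis
      using assms by (auto intro!: provable_from Imp_from_Neg_subchain)
  next
    case False
    with that have "neg (cocat ck cs) (Imp \<phi> \<psi>) = Neg (cs - ck) (Imp \<phi> \<psi>)"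
      by (auto simp: cocat_def neg_def)
    with that False show ?thesis
      using assms by (auto intro!: provable_from Neg_diff_Imp_from_Neg_superchain)
  qed
  show "provable n (Imp (Neg ck \<phi>) (Imp (Neg cs \<psi>) (Neg cs (Imp \<phi> \<psi>))))" if "ck \<inter> cs = {}"
    using that assms by (intro provable_from Neg_Imp_from_Neg_disjoint) auto
qed

end
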